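(* Let $n\ge 1$ and let $\mathcal{R},\mathcal{S}\subseteq 2^{[n]}$ be clutters such that for every partition $[n]=E_0\uplus E_1$ exactly one of the following holds: some member of $\mathcal{R}$ is contained in $E_0$, or some member of $\mathcal{S}$ is contained in $E_1$. Let $K:=2^{[n]}\setminus\widehat{\mathcal{R}}$, where $\widehat{\mathcal{R}}=\{A\subseteq [n]\mid \exists X\in\mathcal{R},\ X\subseteq A\}$, and let $K^\circ=\{[n]\setminus A\mid A\notin K\}$ be its Alexander dual. Suppose $[n]=A_1\uplus\{i\}\uplus A_2$ where every element of $A_1$ is smaller than $i$, every element of $A_2$ is larger than $i$, $A_1\in K$ and $A_2\in K^\circ$ (i.e. $(A_1,A_2;\{i\})$ is the $(n-2)$-dimensional critical simplex of the perfect discrete Morse function on the Bier sphere $K\ast_\Delta K^\circ$). Then \[\min_{I\in\mathcal{R}}\max_{x\in I} x \;=\; i \;=\; \max_{J\in\mathcal{S}}\min_{x\in J} x.\]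
   Context: A clutter on a finite set is a family of subsets none of which contains another. The Bier sphere $Bier(K)=K\ast_\Delta K^\circ$ is the deleted join of $K$ and its Alexander dual; its faces are written as triples $(A_1,A_2;B)$ with $A_1\in K$, $A_2\in K^\circ$, $A_1\cap A_2=\emptyset$ and $B=[n]\setminus(A_1\cup A_2)$. (The real function $f$ on the ground set in the Edmonds–Fulkerson setting is here taken to be the identity on $[n]$.) *)

theory Defs
  imports Main
begin

definition clutter :: "nat \<Rightarrow> nat set set \<Rightarrow> bool" where
  "clutter n R \<longleftrightarrow> R \<subseteq> Pow {1..n} \<and> (\<forall>X\<in>R. \<forall>Y\<in>R. X \<subseteq> Y \<longrightarrow> X = Y)"

definition up_closure :: "nat \<Rightarrow> nat set set \<Rightarrow> nat set set" where
  "up_closure n R = {A. A \<subseteq> {1..n} \<and> (\<exists>X\<in>R. X \<subseteq> A)}"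

definition complex_of :: "nat \<Rightarrow> nat set set \<Rightarrow> nat set set" where
  "complex_of n R = Pow {1..n} - up_closure n R"

definition alexander_dual :: "nat \<Rightarrow> nat set set \<Rightarrow> nat set set" where
  "alexander_dual n K = {{1..n} - A | A. A \<subseteq> {1..n} \<and> A \<notin> K}"

end

theory Submission
  imports Defs
begin

text \<open>
  The split \<open>A1 \<union> {i} \<union> A2\<close> is a threshold: \<open>A1 \<in> K\<close> means that no member of \<open>R\<close>
  lies below \<open>i\<close>, while \<open>A2 \<in> K\<^sup>\<circ>\<close> means that \<open>A1 \<union> {i} \<notin> K\<close>, i.e. some member of
  \<open>R\<close> lies in \<open>A1 \<union> {i}\<close> and hence has maximum \<open>i\<close>; so \<open>min max\<close> over \<open>R\<close> is \<open>i\<close>.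
  Applying the blocker duality to the partitions \<open>(A1, {i} \<union> A2)\<close> and \<open>(A1 \<union> {i}, A2)\<close>
  turns these two facts into the mirror-image statements for \<open>S\<close>, giving \<open>max min = i\<close>.
\<close>

lemma clutter_member_subset: "clutter n R \<Longrightarrow> I \<in> R \<Longrightarrow> I \<subseteq> {1..n}"
  by (auto simp: clutter_def)

lemma clutter_member_finite: "clutter n R \<Longrightarrow> I \<in> R \<Longrightarrow> finite I"
  by (meson clutter_member_subset finite_atLeastAtMost finite_subset)

lemma clutter_finite: "clutter n R \<Longrightarrow> finite R"
  unfolding clutter_def by (auto intro: finite_subset)

lemma complex_of_iff: "A \<in> complex_of n R \<longleftrightarrow> A \<subseteq> {1..n} \<and> \<not> (\<exists>X\<in>R. X \<subseteq> A)"
  by (auto simp: complex_of_def up_closure_def)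

lemma alexander_dual_iff: "A \<in> alexander_dual n K \<longleftrightarrow> A \<subseteq> {1..n} \<and> {1..n} - A \<notin> K"
  by (auto simp: alexander_dual_def double_diff)

lemma Min_Max_image_eqI:
  fixes i :: "'a :: linorder"
  assumes "finite R" and "\<And>I. I \<in> R \<Longrightarrow> finite I"
    and "X \<in> R" and "i \<in> X" and "\<forall>x\<in>X. x \<le> i"
    and "\<And>I. I \<in> R \<Longrightarrow> \<not> I \<subseteq> {..<i}"
  shows "Min (Max ` R) = i"
proof (rule Min_eqI)
  show "i \<le> m" if "m \<in> Max ` R" for m
  proof -
    from that obtain I where I: "I \<in> R" and m: "m = Max I" ..
    obtain x where "x \<in> I" "i \<le> x"
      using assms(6)[OF I] by (auto simp: subset_eq not_less)
    then show ?thesis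
      using Max_ge[OF assms(2)[OF I]] m by fastforce
  qed
  show "i \<in> Max ` R"
  proof
    show "i = Max X"
      using assms(2)[OF assms(3)] assms(4,5) by (intro Max_eqI[symmetric]) auto
  qed (fact assms(3))
qed (use assms(1) in simp)

lemma Max_Min_image_eqI:
  fixes i :: "'a :: linorder"
  assumes "finite S" and "\<And>J. J \<in> S \<Longrightarrow> finite J"
    and "Y \<in> S" and "i \<in> Y" and "\<forall>y\<in>Y. i \<le> y"
    and "\<And>J. J \<in> S \<Longrightarrow> \<not> J \<subseteq> {i<..}"
  shows "Max (Min ` S) = i"
proof (rule Max_eqI)
  show "m \<le> i" if "m \<in> Min ` S" for m
  proof -
    from that obtain J where J: "J \<in> S" and m: "m = Min J" ..
    obtain y where "y \<in> J" "y \<le> i"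
      using assms(6)[OF J] by (auto simp: subset_eq not_less)
    then show ?thesis
      using Min_le[OF assms(2)[OF J]] m by fastforce
  qed
  show "i \<in> Min ` S"
  proof
    show "i = Min Y"
      using assms(2)[OF assms(3)] assms(4,5) by (intro Min_eqI[symmetric]) auto
  qed (fact assms(3))
qed (use assms(1) in simp)

theorem mainTheorem2:
  fixes n i :: nat and R S :: "nat set set" and A1 A2 :: "nat set"
  assumes "n \<ge> 1"
    and "clutter n R" and "clutter n S"
    and "\<forall>E0 E1. E0 \<union> E1 = {1..n} \<and> E0 \<inter> E1 = {} \<longrightarrow>
           ((\<exists>X\<in>R. X \<subseteq> E0) \<noteq> (\<exists>Y\<in>S. Y \<subseteq> E1))"
    and "{1..n} = A1 \<union> {i} \<union> A2" and "i \<notin> A1" and "i \<notin> A2" and "A1 \<inter> A2 = {}"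
    and "\<forall>x\<in>A1. x < i" and "\<forall>x\<in>A2. i < x"
    and "A1 \<in> complex_of n R"
    and "A2 \<in> alexander_dual n (complex_of n R)"
  shows "Min ((\<lambda>I. Max I) ` R) = i \<and> Max ((\<lambda>J. Min J) ` S) = i"
proof -
  note blocker = assms(4)[rule_format]
  have no_R_in_A1: "\<not> (\<exists>X\<in>R. X \<subseteq> A1)"
    using assms(11) by (simp add: complex_of_iff)
  have "{1..n} - A2 = A1 \<union> {i}"
    using assms(5,7,8) by auto
  then obtain X where X: "X \<in> R" "X \<subseteq> A1 \<union> {i}"
    using assms(5,12) by (auto simp: alexander_dual_iff complex_of_iff)
  obtain Y where Y: "Y \<in> S" "Y \<subseteq> {i} \<union> A2"
    using blocker[of A1 "{i} \<union> A2"] no_R_in_A1 assms(5,6,8) by auto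
  have no_S_in_A2: "\<not> (\<exists>Y\<in>S. Y \<subseteq> A2)"
    using blocker[of "A1 \<union> {i}" A2] X assms(5,7,8) by auto
  have below_i_in_A1: "{1..n} \<inter> {..<i} \<subseteq> A1" and above_i_in_A2: "{1..n} \<inter> {i<..} \<subseteq> A2"
    using assms(5,9,10) by auto
  have R_not_below: "\<not> I \<subseteq> {..<i}" if "I \<in> R" for I
    using below_i_in_A1 no_R_in_A1 that clutter_member_subset[OF assms(2) that] by blast
  have S_not_above: "\<not> J \<subseteq> {i<..}" if "J \<in> S" for J
    using above_i_in_A2 no_S_in_A2 that clutter_member_subset[OF assms(3) that] by blast
  have "i \<in> X" and "i \<in> Y"
    using X Y no_R_in_A1 no_S_in_A2 by blast+
  moreover have "\<forall>x\<in>X. x \<le> i" and "\<forall>y\<in>Y. i \<le> y"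
    using X(2) Y(2) assms(9,10) by (auto simp: less_imp_le)
  ultimately show ?thesis
    using Min_Max_image_eqI[OF clutter_finite[OF assms(2)] clutter_member_finite[OF assms(2)] X(1)]
      Max_Min_image_eqI[OF clutter_finite[OF assms(3)] clutter_member_finite[OF assms(3)] Y(1)]
      R_not_below S_not_above by simp
qed

end
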